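(* Let $\underline{d}=(d_0,\dots,d_n)\in\mathbb{N}^{n+1}$, fix $k\in[0,n]$ with $d_k=\min(d_0,\dots,d_n)$, and let $\underline{e}$ be a rising vector. Then the orbit $\mathcal{O}(\underline{e})$ is contained in $\Sigma_{\underline{d}}$.
   Context: $\mathrm{Rep}_{\underline{d}}=\bigoplus_{i=1}^n\mathrm{Hom}(\mathbb{C}^{d_{i-1}},\mathbb{C}^{d_i})$ with the action of $\mathrm{GL}_{\underline{d}}=\prod_{i=0}^n\mathrm{GL}(d_i,\mathbb{C})$; $\Sigma_{\underline{d}}=\{(A_i)\in\mathrm{Rep}_{\underline{d}}: A_n\cdots A_1=0\}$. A rising vector is a tuple $\underline{e}=(e_0,\dots,e_{k-1},\star,e_{k+1},\dots,e_n)$ of nonnegative integers with $\sum_{i\ne k}e_i=d_k$. Its dot set: for $x\in[0,k-1]$ the points $(x,y)$ with $d_k-d_x-\sum_{i=x}^{k-1}e_i\le y<d_k-\sum_{i=x}^{k-1}e_i$; for $x=k$ the points $(k,y)$, $0\le y<d_k$; for $x\in[k+1,n]$ the points $(x,y)$ with $\sum_{i=k+1}^xe_i\le y<d_x+\sum_{i=k+1}^xe_i$. The quiver module $V(\underline{e})$ has at vertex $x$ the space with basis the dots of column $x$, the map $x-1\to x$ sending dot $(x-1,y)$ to $(x,y)$ if it exists and to $0$ otherwise. Choosing bases gives a tuple of matrices $(A_1,\dots,A_n)\in\mathrm{Rep}_{\underline{d}}$; $\mathcal{O}(\underline{e})$ is its $\mathrm{GL}_{\underline{d}}$-orbit. 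*)

theory Defs
  imports "Jordan_Normal_Form.Matrix"
begin

text \<open>Dimension vectors are d :: nat => nat, read on {0..n}.
  An element of Rep_d is a family A :: nat => complex mat, where only A 1, ..., A n matter,
  and A i is a (d i) x (d (i-1)) matrix (a map C^{d_{i-1}} -> C^{d_i}).\<close>

definition Rep :: "nat \<Rightarrow> (nat \<Rightarrow> nat) \<Rightarrow> (nat \<Rightarrow> complex mat) set" where
  "Rep n d = {A. \<forall>i\<in>{1..n}. A i \<in> carrier_mat (d i) (d (i - 1))}"

fun comp_path :: "(nat \<Rightarrow> nat) \<Rightarrow> (nat \<Rightarrow> complex mat) \<Rightarrow> nat \<Rightarrow> complex mat" where
  "comp_path d A 0 = 1\<^sub>m (d 0)"
| "comp_path d A (Suc i) = A (Suc i) * comp_path d A i"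

definition Sigma_d :: "nat \<Rightarrow> (nat \<Rightarrow> nat) \<Rightarrow> (nat \<Rightarrow> complex mat) set" where
  "Sigma_d n d = {A \<in> Rep n d. comp_path d A n = 0\<^sub>m (d n) (d 0)}"

definition GL_elem :: "nat \<Rightarrow> (nat \<Rightarrow> nat) \<Rightarrow> (nat \<Rightarrow> complex mat) \<Rightarrow> bool" where
  "GL_elem n d g = (\<forall>i\<in>{0..n}. g i \<in> carrier_mat (d i) (d i) \<and> invertible_mat (g i))"

definition orbit :: "nat \<Rightarrow> (nat \<Rightarrow> nat) \<Rightarrow> (nat \<Rightarrow> complex mat) \<Rightarrow> (nat \<Rightarrow> complex mat) set" where
  "orbit n d A = {B. \<exists>g h. GL_elem n d g \<and>
      (\<forall>i\<in>{0..n}. h i \<in> carrier_mat (d i) (d i) \<and> inverts_mat (g i) (h i) \<and> inverts_mat (h i) (g i)) \<and>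
      (\<forall>i\<in>{1..n}. B i = g i * A i * h (i - 1))}"

text \<open>Rising vector: e :: nat => nat, entries e_i for i in [0,n], i ~= k (the value e k is the
  placeholder star and is ignored), with sum_{i ~= k} e_i = d_k.\<close>
definition rising_vector :: "nat \<Rightarrow> (nat \<Rightarrow> nat) \<Rightarrow> nat \<Rightarrow> (nat \<Rightarrow> nat) \<Rightarrow> bool" where
  "rising_vector n d k e = ((\<Sum>i\<in>{0..n} - {k}. e i) = d k)"

text \<open>Lowest y-coordinate of the dots in column x (dots are (x,y) for lo \<le> y < lo + d_x;
  for x = k this is 0 \<le> y < d_k).\<close>
definition dot_lo :: "(nat \<Rightarrow> nat) \<Rightarrow> nat \<Rightarrow> (nat \<Rightarrow> nat) \<Rightarrow> nat \<Rightarrow> int" where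
  "dot_lo d k e x =
     (if x < k then int (d k) - int (d x) - int (\<Sum>i\<in>{x..k-1}. e i)
      else if x = k then 0
      else int (\<Sum>i\<in>{k+1..x}. e i))"

definition dots :: "(nat \<Rightarrow> nat) \<Rightarrow> nat \<Rightarrow> (nat \<Rightarrow> nat) \<Rightarrow> nat \<Rightarrow> int set" where
  "dots d k e x = {y. dot_lo d k e x \<le> y \<and> y < dot_lo d k e x + int (d x)}"

text \<open>Matrix of V(e): basis of column x ordered by increasing y (r-th basis vector = dot
  (x, lo_x + r)); the map x-1 -> x sends dot (x-1,y) to (x,y) if that dot exists, else to 0.\<close>
definition Vmat :: "(nat \<Rightarrow> nat) \<Rightarrow> nat \<Rightarrow> (nat \<Rightarrow> nat) \<Rightarrow> nat \<Rightarrow> complex mat" where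
  "Vmat d k e x = mat (d x) (d (x - 1))
     (\<lambda>(r, c). if dot_lo d k e x + int r = dot_lo d k e (x - 1) + int c then 1 else 0)"

end

theory Submission
  imports Defs
begin

text \<open>Along the path, V(e) only moves a dot (x-1, y) horizontally to (x, y), so the composite
  A_n ... A_1 of V(e) can only send a dot of column 0 to a dot of column n at the same height.
  For a rising vector the dots of column 0 occupy the heights below d_k - (e_0 + ... + e_(k-1))
  and those of column n the heights from e_(k+1) + ... + e_n = d_k - (e_0 + ... + e_(k-1)) on,
  so the composite vanishes. Since Sigma_d is stable under the GL_d-action, the whole orbit
  lies in Sigma_d.\<close>

lemma comp_path_carrier:
  assumes "A \<in> Rep n d" and "i \<le> n"
  shows "comp_path d A i \<in> carrier_mat (d i) (d 0)"
  using assms(2)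
proof (induction i)
  case (Suc i)
  then have "A (Suc i) \<in> carrier_mat (d (Suc i)) (d i)"
    using assms(1) unfolding Rep_def by force
  with Suc show ?case by simp
qed simp

lemma conjugate_mult_conjugate:
  fixes A C g g' h h' :: "'a :: semiring_1 mat"
  assumes "g' \<in> carrier_mat a a" "A \<in> carrier_mat a b" "h \<in> carrier_mat b b" "g \<in> carrier_mat b b"
    "C \<in> carrier_mat b c" "h' \<in> carrier_mat c c" and "h * g = 1\<^sub>m b"
  shows "g' * A * h * (g * C * h') = g' * (A * C) * h'"
proof -
  have "g' * A * h * (g * C * h') = g' * (A * ((h * g) * (C * h')))"
    using assms(1-6) by (simp add: assoc_mult_mat[of _ a a _ b _ b] assoc_mult_mat[of _ a b _ b _ c]
        assoc_mult_mat[of _ b b _ c _ c] assoc_mult_mat[of _ a a _ b _ c] assoc_mult_mat[of _ b b _ b _ c])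
  also have "\<dots> = g' * (A * C) * h'"
    using assms by (simp add: assoc_mult_mat[of _ a b _ c _ c] assoc_mult_mat[of _ a a _ c _ c])
  finally show ?thesis .
qed

lemma comp_path_conjugate:
  assumes A: "A \<in> Rep n d"
    and g: "\<forall>i\<in>{0..n}. g i \<in> carrier_mat (d i) (d i)"
    and h: "\<forall>i\<in>{0..n}. h i \<in> carrier_mat (d i) (d i)"
    and gh0: "g 0 * h 0 = 1\<^sub>m (d 0)"
    and hg: "\<forall>i<n. h i * g i = 1\<^sub>m (d i)"
    and B: "\<forall>i\<in>{1..n}. B i = g i * A i * h (i - 1)"
    and "i \<le> n"
  shows "comp_path d B i = g i * comp_path d A i * h 0"
  using \<open>i \<le> n\<close>
proof (induction i)
  case 0
  have "g 0 \<in> carrier_mat (d 0) (d 0)"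
    using g by simp
  with gh0 show ?case by simp
next
  case (Suc i)
  have gS: "g (Suc i) \<in> carrier_mat (d (Suc i)) (d (Suc i))"
    and gi: "g i \<in> carrier_mat (d i) (d i)" and hi: "h i \<in> carrier_mat (d i) (d i)"
    and h0: "h 0 \<in> carrier_mat (d 0) (d 0)"
    using g h Suc.prems by auto
  have AS: "A (Suc i) \<in> carrier_mat (d (Suc i)) (d i)"
    using A Suc.prems unfolding Rep_def by force
  have C: "comp_path d A i \<in> carrier_mat (d i) (d 0)"
    using comp_path_carrier[OF A] Suc.prems by simp
  have "comp_path d B (Suc i) = g (Suc i) * A (Suc i) * h i * (g i * comp_path d A i * h 0)"
    using Suc B by simp
  also have "\<dots> = g (Suc i) * comp_path d A (Suc i) * h 0"
    using conjugate_mult_conjugate[OF gS AS hi gi C h0] hg Suc.prems by simp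
  finally show ?case .
qed

lemma orbit_subset_Sigma_d:
  assumes "A \<in> Sigma_d n d"
  shows "orbit n d A \<subseteq> Sigma_d n d"
proof
  fix B assume "B \<in> orbit n d A"
  then obtain g h where "GL_elem n d g"
    and h: "\<forall>i\<in>{0..n}. h i \<in> carrier_mat (d i) (d i) \<and> inverts_mat (g i) (h i) \<and> inverts_mat (h i) (g i)"
    and B: "\<forall>i\<in>{1..n}. B i = g i * A i * h (i - 1)"
    unfolding orbit_def by blast
  then have g: "\<forall>i\<in>{0..n}. g i \<in> carrier_mat (d i) (d i)"
    unfolding GL_elem_def by blast
  have A: "A \<in> Rep n d" and A0: "comp_path d A n = 0\<^sub>m (d n) (d 0)"
    using assms unfolding Sigma_d_def by auto
  have gh0: "g 0 * h 0 = 1\<^sub>m (d 0)"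
  proof -
    have "g 0 \<in> carrier_mat (d 0) (d 0)" and "inverts_mat (g 0) (h 0)"
      using g h by auto
    then show ?thesis
      unfolding inverts_mat_def by simp
  qed
  have hg: "\<forall>i<n. h i * g i = 1\<^sub>m (d i)"
  proof (intro allI impI)
    fix i assume "i < n"
    then have "h i \<in> carrier_mat (d i) (d i)" and "inverts_mat (h i) (g i)"
      using h by auto
    then show "h i * g i = 1\<^sub>m (d i)"
      unfolding inverts_mat_def by simp
  qed
  have "g n \<in> carrier_mat (d n) (d n)" and "h 0 \<in> carrier_mat (d 0) (d 0)"
    using g h by auto
  moreover have "comp_path d B n = g n * comp_path d A n * h 0"
    using comp_path_conjugate[OF A g _ gh0 hg B] h by blast
  ultimately have "comp_path d B n = 0\<^sub>m (d n) (d 0)"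
    using A0 by simp
  moreover have "B \<in> Rep n d"
    using A g h B unfolding Rep_def by fastforce
  ultimately show "B \<in> Sigma_d n d"
    unfolding Sigma_d_def by blast
qed

lemma Vmat_in_Rep: "Vmat d k e \<in> Rep n d"
  by (simp add: Rep_def Vmat_def)

lemma comp_path_Vmat_nonzero:
  assumes "i \<le> n" and "r < d i" and "c < d 0"
    and "comp_path d (Vmat d k e) i $$ (r, c) \<noteq> 0"
  shows "dot_lo d k e i + int r = dot_lo d k e 0 + int c"
  using assms
proof (induction i arbitrary: r)
  case (Suc i)
  let ?V = "Vmat d k e (Suc i)" and ?C = "comp_path d (Vmat d k e) i"
  have "?V \<in> carrier_mat (d (Suc i)) (d i)"
    by (simp add: Vmat_def)
  moreover have "?C \<in> carrier_mat (d i) (d 0)"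
    using comp_path_carrier[OF Vmat_in_Rep[of d k e n]] Suc.prems(1) by simp
  ultimately have "comp_path d (Vmat d k e) (Suc i) $$ (r, c) = (\<Sum>j<d i. ?V $$ (r, j) * ?C $$ (j, c))"
    using Suc.prems(2,3) by (simp add: scalar_prod_def lessThan_atLeast0)
  with Suc.prems(4) have "(\<Sum>j<d i. ?V $$ (r, j) * ?C $$ (j, c)) \<noteq> 0"
    by simp
  then obtain j where "j \<in> {..<d i}" and "?V $$ (r, j) * ?C $$ (j, c) \<noteq> 0"
    by (rule sum.not_neutral_contains_not_neutral)
  then have j: "j < d i" and V: "?V $$ (r, j) \<noteq> 0" and C: "?C $$ (j, c) \<noteq> 0"
    by auto
  from V j Suc.prems(2) have "dot_lo d k e (Suc i) + int r = dot_lo d k e i + int j"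
    by (simp add: Vmat_def split: if_splits)
  also have "\<dots> = dot_lo d k e 0 + int c"
    using Suc.IH[OF _ j Suc.prems(3) C] Suc.prems(1) by simp
  finally show ?case .
qed (simp split: if_splits)

lemma comp_path_Vmat_eq_0:
  assumes "dot_lo d k e 0 + int (d 0) \<le> dot_lo d k e n"
  shows "comp_path d (Vmat d k e) n = 0\<^sub>m (d n) (d 0)"
proof (rule eq_matI)
  fix r c assume "r < dim_row (0\<^sub>m (d n) (d 0))" and "c < dim_col (0\<^sub>m (d n) (d 0))"
  then have r: "r < d n" and c: "c < d 0"
    by simp_all
  have "comp_path d (Vmat d k e) n $$ (r, c) = 0"
  proof (rule ccontr)
    assume "comp_path d (Vmat d k e) n $$ (r, c) \<noteq> 0"
    with r c have "dot_lo d k e n + int r = dot_lo d k e 0 + int c"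
      using comp_path_Vmat_nonzero[of n n] by blast
    with assms c show False
      by linarith
  qed
  with r c show "comp_path d (Vmat d k e) n $$ (r, c) = 0\<^sub>m (d n) (d 0) $$ (r, c)"
    by simp
qed (use comp_path_carrier[OF Vmat_in_Rep[of d k e n]] in auto)

lemma rising_vector_dot_lo_0_add:
  assumes "k \<le> n" and "rising_vector n d k e"
  shows "dot_lo d k e 0 + int (d 0) = dot_lo d k e n"
proof -
  have "{0..n} - {k} = {0..<k} \<union> {k+1..n}"
    using assms(1) by auto
  moreover have "sum e ({0..<k} \<union> {k+1..n}) = (\<Sum>i\<in>{0..<k}. e i) + (\<Sum>i\<in>{k+1..n}. e i)"
    by (rule sum.union_disjoint) auto
  ultimately have "(\<Sum>i\<in>{0..<k}. e i) + (\<Sum>i\<in>{k+1..n}. e i) = d k"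
    using assms(2) unfolding rising_vector_def by simp
  moreover have "dot_lo d k e 0 + int (d 0) = int (d k) - int (\<Sum>i\<in>{0..<k}. e i)"
  proof (cases "k = 0")
    case False
    then have "{0..k-1} = {0..<k}"
      by auto
    with False show ?thesis
      by (simp add: dot_lo_def)
  qed (simp add: dot_lo_def)
  moreover have "dot_lo d k e n = int (\<Sum>i\<in>{k+1..n}. e i)"
    using assms(1) by (cases "k = n") (simp_all add: dot_lo_def)
  ultimately show ?thesis
    by linarith
qed

lemma rising_vector_Vmat_in_Sigma_d:
  assumes "k \<le> n" and "rising_vector n d k e"
  shows "Vmat d k e \<in> Sigma_d n d"
  using comp_path_Vmat_eq_0 rising_vector_dot_lo_0_add[OF assms] Vmat_in_Rep
  unfolding Sigma_d_def by simp

theorem proposition4p7: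
  fixes n k :: nat and d e :: "nat \<Rightarrow> nat"
  assumes "k \<le> n"
    and "d k = Min (d ` {0..n})"
    and "rising_vector n d k e"
  shows "orbit n d (Vmat d k e) \<subseteq> Sigma_d n d"
  using rising_vector_Vmat_in_Sigma_d[OF assms(1,3)] by (rule orbit_subset_Sigma_d)

end
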